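(* Let $B$ be a singleton board with $n$ columns, and let $M$ be the maximum entry of its $m$-level root vector $\xi_m(B)$. If the first occurrence of $M$ in $\xi_m(B)$ is in position $j$, then $B$ is connected by a sequence of edges in the $m$-level rook equivalence graph $G_m(B)$ to a board $B'$ whose $m$-level root vector $\xi_m(B')$ agrees with $\xi_m(B)$ in the first $j$ positions and is weakly decreasing in the positions $i\ge j$.
   Context: Fix an integer $m>0$. A Ferrers board is given by a weakly increasing sequence of non-negative integers $B=(b_1,\ldots,b_n)$ of column heights (cells in column $i$, rows $1,\ldots,b_i$, of the first quadrant); prepending height-$0$ columns on the left does not change the board, and boards are compared with the same number of columns by such padding. The rows are partitioned into levels: level $t$ consists of rows $(t-1)m+1,\ldots,tm$. An $m$-level rook placement of $k$ rooks is a set of $k$ cells of $B$, no two in the same level or the same column; $r_{k,m}(B)$ is their number, and two boards are $m$-level rook equivalent if they have equal $r_{k,m}$ for all $k\ge0$. For an integer $o$, $\lfloor o\rfloor_m$ is the largest multiple of $m$ that is $\le o$. $B$ is singleton if for each $i<n$, $b_i-\lfloor b_i\rfloor_m\ne0$ implies $\lfloor b_i\rfloor_m<\lfloor b_{i+1}\rfloor_m$. The $m$-level root vector of $B$ is $\xi_m(B)=\langle 0-b_1,m-b_2,\ldots,m(n-1)-b_n\rangle$. The $m$-level rook equivalence graph $G_m(B)$ of a singleton board $B$ has as vertices all singleton boards $m$-level rook equivalent to $B$, and $\{B_1,B_2\}$ is an edge iff, written with the same number of columns, $B_1$ and $B_2$ differ in exactly two columns $i,j$, where $B_1$ has $k$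 more cells than $B_2$ in column $i$ and $k$ fewer in column $j$, for some $k>0$. *)

theory Defs
  imports Main
begin

(* A board is a list of column heights b_1..b_n (list index 0 = column 1).
   Cells: (column index i, row r) with 1 <= r <= b!i. *)

definition ferrers :: "nat list \<Rightarrow> bool" where
  "ferrers b \<longleftrightarrow> sorted b"

definition pad :: "nat \<Rightarrow> nat list \<Rightarrow> nat list" where
  "pad k b = replicate k 0 @ b"

definition cells :: "nat list \<Rightarrow> (nat \<times> nat) set" where
  "cells b = {(i, r). i < length b \<and> 1 \<le> r \<and> r \<le> b ! i}"

definition level :: "nat \<Rightarrow> nat \<Rightarrow> nat" where
  "level m r = (r - 1) div m + 1"

definition rook_placements :: "nat \<Rightarrow> nat \<Rightarrow> nat list \<Rightarrow> (nat \<times> nat) set set" where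
  "rook_placements m k b = {P. P \<subseteq> cells b \<and> card P = k \<and> inj_on fst P \<and>
                               inj_on (\<lambda>(i, r). level m r) P}"

definition rook_num :: "nat \<Rightarrow> nat \<Rightarrow> nat list \<Rightarrow> nat" where
  "rook_num m k b = card (rook_placements m k b)"

definition rook_equiv :: "nat \<Rightarrow> nat list \<Rightarrow> nat list \<Rightarrow> bool" where
  "rook_equiv m b c \<longleftrightarrow> (\<forall>k. rook_num m k b = rook_num m k c)"

definition floor_m :: "nat \<Rightarrow> nat \<Rightarrow> nat" where
  "floor_m m x = (x div m) * m"

definition singleton_board :: "nat \<Rightarrow> nat list \<Rightarrow> bool" where
  "singleton_board m b \<longleftrightarrow>
     (\<forall>i. Suc i < length b \<longrightarrow> b ! i - floor_m m (b ! i) \<noteq> 0 \<longrightarrow>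
          floor_m m (b ! i) < floor_m m (b ! Suc i))"

(* root vector <0 - b_1, m - b_2, ..., m(n-1) - b_n>, 0-indexed *)
definition root_vec :: "nat \<Rightarrow> nat list \<Rightarrow> int list" where
  "root_vec m b = map (\<lambda>i. int (m * i) - int (b ! i)) [0..<length b]"

definition rook_edge :: "nat list \<Rightarrow> nat list \<Rightarrow> bool" where
  "rook_edge b1 b2 \<longleftrightarrow>
     (\<exists>N. length b1 \<le> N \<and> length b2 \<le> N \<and>
        (let p1 = pad (N - length b1) b1; p2 = pad (N - length b2) b2 in
          \<exists>i j k. i < N \<and> j < N \<and> i \<noteq> j \<and> k > 0 \<and>
            p1 ! i = p2 ! i + k \<and> p2 ! j = p1 ! j + k \<and>
            (\<forall>l<N. l \<noteq> i \<longrightarrow> l \<noteq> j \<longrightarrow> p1 ! l = p2 ! l)))"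

definition graph_vertices :: "nat \<Rightarrow> nat list \<Rightarrow> nat list set" where
  "graph_vertices m b = {c. ferrers c \<and> singleton_board m c \<and> rook_equiv m c b}"

definition graph_edge :: "nat \<Rightarrow> nat list \<Rightarrow> nat list \<Rightarrow> nat list \<Rightarrow> bool" where
  "graph_edge m b c d \<longleftrightarrow>
     c \<in> graph_vertices m b \<and> d \<in> graph_vertices m b \<and> rook_edge c d"

end

(* Adding a last column of height h to a singleton board multiplies in the factor h - m k at
   rook level k: every cell of the earlier columns lies in a row at most floor_m m h, so each
   of the k levels used by a placement occupies m full rows of the new column. In terms of the
   root vector this recursion is symmetric in the roots, so singleton boards whose root vectors
   are permutations of each other are m-level rook equivalent.
   In root coordinates the singleton condition reads x_(i+1) <= floor_m(x_i) + m. To the right of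
   the maximum at position j, exchange the root at the first unsorted position p with the last
   root that exceeds it: the new root at p is bounded by the already sorted root before it, and
   every root after the exchanged position is at most the old root at p, so the board stays
   singleton. Each exchange moves cells between two columns, hence is an edge of G_m(B), and
   repeating it sorts the roots after position j into weakly decreasing order. *)

theory Submission
  imports Defs "HOL-Library.Multiset"
begin

section \<open>Singleton boards in root coordinates\<close>

definition ceil_m :: "nat \<Rightarrow> nat \<Rightarrow> nat" where
  "ceil_m m x = (x + m - 1) div m * m"

lemma div_round_up:
  assumes "0 < m" "v < m"
  shows "(m * u + v + m - 1) div m = (if v = 0 then u else Suc u)"
proof -
  have "m * u + v + m - 1 = (if v = 0 then m - 1 else v - 1) + (if v = 0 then u else Suc u) * m"
    using assms by (auto simp: algebra_simps)
  then show ?thesis using assms by (simp del: One_nat_def)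
qed

lemma le_ceil_m:
  assumes "m > 0"
  shows "x \<le> ceil_m m x"
proof -
  have "(x + m - 1) div m * m + (x + m - 1) mod m = x + m - 1" by (rule div_mult_mod_eq)
  moreover have "(x + m - 1) mod m < m" using assms by simp
  ultimately show ?thesis unfolding ceil_m_def by linarith
qed

lemma ceil_m_le_floor_m: "ceil_m m x \<le> y \<Longrightarrow> ceil_m m x \<le> floor_m m y"
  unfolding ceil_m_def floor_m_def
  by (cases "m = 0") (simp_all add: less_eq_div_iff_mult_less_eq mult_le_mono1)

lemma singleton_pair_iff_ceil_m_le:
  assumes m: "m > 0"
  shows "(p \<le> q \<and> (p - floor_m m p \<noteq> 0 \<longrightarrow> floor_m m p < floor_m m q)) \<longleftrightarrow> ceil_m m p \<le> q"
proof -
  obtain u v where p: "p = m * u + v" and v: "v < m"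
    using m div_mult_mod_eq[of p m] mod_less_divisor[OF m, of p] by (metis mult.commute)
  have floor_p: "floor_m m p = m * u" using p v by (simp add: floor_m_def)
  have "m * u < floor_m m q \<longleftrightarrow> Suc u \<le> q div m"
    using m by (simp add: floor_m_def mult.commute Suc_le_eq)
  also have "\<dots> \<longleftrightarrow> m * Suc u \<le> q"
    using less_eq_div_iff_mult_less_eq[OF m] by (simp add: mult.commute)
  finally have floor_less_iff: "m * u < floor_m m q \<longleftrightarrow> m * Suc u \<le> q" .
  have "ceil_m m p = (if v = 0 then m * u else m * Suc u)"
    using p div_round_up[OF m v, of u] by (simp add: ceil_m_def mult.commute)
  then show ?thesis using p v floor_p floor_less_iff by auto
qed

lemma ferrers_singleton_board_iff:
  assumes "m > 0"
  shows "ferrers b \<and> singleton_board m b \<longleftrightarrow> (\<forall>i. Suc i < length b \<longrightarrow> ceil_m m (b ! i) \<le> b ! Suc i)"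
  unfolding ferrers_def singleton_board_def sorted_iff_nth_Suc singleton_pair_iff_ceil_m_le[OF assms, symmetric]
  by blast

lemma ferrers_singleton_board_butlast:
  assumes "m > 0" "ferrers (b @ [h])" "singleton_board m (b @ [h])"
  shows "ferrers b \<and> singleton_board m b"
proof -
  have "\<forall>i. Suc i < length (b @ [h]) \<longrightarrow> ceil_m m ((b @ [h]) ! i) \<le> (b @ [h]) ! Suc i"
    using assms ferrers_singleton_board_iff by blast
  then have "ceil_m m (b ! i) \<le> b ! Suc i" if "Suc i < length b" for i
    using that by (auto simp: nth_append dest: spec[of _ i])
  then show ?thesis
    unfolding ferrers_singleton_board_iff[OF assms(1)] by blast
qed

lemma ferrers_singleton_board_le_floor_last:
  assumes m: "m > 0" and b: "ferrers (b @ [h])" "singleton_board m (b @ [h])" and i: "i < length b"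
  shows "b ! i \<le> floor_m m h"
proof -
  obtain n where n: "length b = Suc n" using i by (cases "length b") auto
  have "(b @ [h]) ! i \<le> (b @ [h]) ! n"
    using b(1) i n unfolding ferrers_def sorted_iff_nth_mono by simp
  then have "b ! i \<le> b ! n" using i n by (simp add: nth_append)
  also have "\<dots> \<le> ceil_m m (b ! n)" using le_ceil_m[OF m] .
  also have "\<dots> \<le> floor_m m h"
  proof (rule ceil_m_le_floor_m)
    have "ceil_m m ((b @ [h]) ! n) \<le> (b @ [h]) ! Suc n"
      using ferrers_singleton_board_iff[OF m, THEN iffD1, OF conjI[OF b]] n by simp
    then show "ceil_m m (b ! n) \<le> h" using n by (simp add: nth_append)
  qed
  finally show ?thesis .
qed

lemma length_root_vec [simp]: "length (root_vec m b) = length b"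
  by (simp add: root_vec_def)

lemma nth_root_vec: "i < length b \<Longrightarrow> root_vec m b ! i = int (m * i) - int (b ! i)"
  by (simp add: root_vec_def)

lemma root_vec_snoc: "root_vec m (b @ [h]) = root_vec m b @ [int (m * length b) - int h]"
  by (auto simp: root_vec_def nth_append)

lemma floor_mult_minus_eq:
  assumes m: "m > 0"
  shows "(int (m * i) - int p) div int m * int m = int (m * i) - int (ceil_m m p)"
proof -
  obtain u v where p: "p = m * u + v" and v: "v < m"
    using m div_mult_mod_eq[of p m] mod_less_divisor[OF m, of p] by (metis mult.commute)
  show ?thesis
  proof (cases "v = 0")
    case True
    have "int (m * i) - int p = (int i - int u) * int m"
      using p True by (simp add: algebra_simps)
    then have d: "(int (m * i) - int p) div int m = int i - int u" using m by simp
    have c: "ceil_m m p = m * u"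
      using p True div_round_up[OF m v, of u] by (simp add: ceil_m_def mult.commute)
    show ?thesis unfolding d c by (simp add: algebra_simps)
  next
    case False
    have "int (m * i) - int p = (int m - int v) + (int i - int u - 1) * int m"
      using p by (simp add: algebra_simps)
    then have d: "(int (m * i) - int p) div int m = int i - int u - 1"
      using False v by (simp add: div_pos_pos_trivial)
    have c: "ceil_m m p = m * Suc u"
      using p False div_round_up[OF m v, of u] by (simp add: ceil_m_def mult.commute)
    show ?thesis unfolding d c by (simp add: algebra_simps)
  qed
qed

definition singleton_step :: "nat \<Rightarrow> int \<Rightarrow> int \<Rightarrow> bool" where
  "singleton_step m x y \<longleftrightarrow> y \<le> x div int m * int m + int m"

definition singleton_roots :: "nat \<Rightarrow> int list \<Rightarrow> bool" where
  "singleton_roots m xs \<longleftrightarrow> (\<forall>i. Suc i < length xs \<longrightarrow> singleton_step m (xs ! i) (xs ! Suc i))"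

lemma singleton_step_root_iff:
  assumes "m > 0"
  shows "singleton_step m (int (m * i) - int p) (int (m * Suc i) - int q) \<longleftrightarrow> ceil_m m p \<le> q"
  unfolding singleton_step_def floor_mult_minus_eq[OF assms] by simp

lemma singleton_roots_root_vec_iff:
  assumes "m > 0"
  shows "singleton_roots m (root_vec m b) \<longleftrightarrow> ferrers b \<and> singleton_board m b"
proof -
  have "singleton_step m (root_vec m b ! i) (root_vec m b ! Suc i) \<longleftrightarrow> ceil_m m (b ! i) \<le> b ! Suc i"
    if "Suc i < length b" for i
    using that by (simp only: nth_root_vec[OF Suc_lessD[OF that]] nth_root_vec[OF that]
        singleton_step_root_iff[OF assms])
  then show ?thesis
    unfolding ferrers_singleton_board_iff[OF assms] singleton_roots_def by auto
qed

lemma singleton_step_mono_left: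
  assumes "m > 0" "singleton_step m x y" "x \<le> x'"
  shows "singleton_step m x' y"
proof -
  have "x div int m * int m \<le> x' div int m * int m"
    using assms by (intro mult_right_mono zdiv_mono1) simp_all
  then show ?thesis using assms(2) unfolding singleton_step_def by linarith
qed

lemma singleton_step_mono_right: "singleton_step m x y \<Longrightarrow> y' \<le> y \<Longrightarrow> singleton_step m x y'"
  unfolding singleton_step_def by linarith

lemma singleton_step_of_le:
  assumes "m > 0" "y \<le> x"
  shows "singleton_step m x y"
proof -
  have "x mod int m < int m" using assms(1) by simp
  then show ?thesis
    using assms(2) minus_mod_eq_div_mult[of x "int m"] unfolding singleton_step_def by linarith
qed

lemma singleton_roots_le_mult:
  assumes m: "m > 0" and xs: "singleton_roots m xs" "xs ! 0 \<le> 0"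
  shows "i < length xs \<Longrightarrow> xs ! i \<le> int (m * i)"
proof (induction i)
  case (Suc i)
  have "xs ! Suc i \<le> xs ! i div int m * int m + int m"
    using Suc.prems xs(1) by (simp add: singleton_roots_def singleton_step_def)
  moreover have "xs ! i div int m * int m \<le> xs ! i"
  proof -
    have "0 \<le> xs ! i mod int m" using m by simp
    then show ?thesis using minus_mod_eq_div_mult[of "xs ! i" "int m"] by linarith
  qed
  ultimately show ?case
    using Suc by (simp add: algebra_simps)
qed (use xs in simp)

definition swap :: "'a list \<Rightarrow> nat \<Rightarrow> nat \<Rightarrow> 'a list" where
  "swap xs a c = xs[a := xs ! c, c := xs ! a]"

lemma length_swap [simp]: "length (swap xs a c) = length xs"
  by (simp add: swap_def)

lemma nth_swap:
  "a < length xs \<Longrightarrow> c < length xs \<Longrightarrow> a \<noteq> c \<Longrightarrow>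
    swap xs a c ! t = (if t = c then xs ! a else if t = a then xs ! c else xs ! t)"
  by (simp add: swap_def nth_list_update)

lemma mset_swap_eq [simp]: "a < length xs \<Longrightarrow> c < length xs \<Longrightarrow> mset (swap xs a c) = mset xs"
  by (simp add: swap_def mset_swap)

lemma singleton_roots_swap:
  assumes m: "m > 0" and xs: "singleton_roots m xs" and ac: "0 < a" "a < c" "c < length xs"
    and less: "xs ! a < xs ! c" and before: "xs ! c \<le> xs ! (a - 1)"
    and after: "\<forall>l. c < l \<and> l < length xs \<longrightarrow> xs ! l \<le> xs ! a"
  shows "singleton_roots m (swap xs a c)"
  unfolding singleton_roots_def
proof (intro allI impI)
  fix i assume i: "Suc i < length (swap xs a c)"
  have step: "singleton_step m (xs ! i) (xs ! Suc i)" using xs i by (simp add: singleton_roots_def)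
  have swap: "swap xs a c ! t = (if t = c then xs ! a else if t = a then xs ! c else xs ! t)" for t
    using ac by (simp add: nth_swap)
  consider "Suc i = a" | "i = a" "Suc i = c" | "i = a" "Suc i < c" | "Suc i = c" "a < i" | "i = c"
    | "i \<noteq> a" "i \<noteq> c" "Suc i \<noteq> a" "Suc i \<noteq> c"
    using ac by linarith
  then show "singleton_step m (swap xs a c ! i) (swap xs a c ! Suc i)"
  proof cases
    case 1
    then show ?thesis using singleton_step_of_le[OF m before] ac by (auto simp: swap)
  next
    case 2
    then show ?thesis using singleton_step_of_le[OF m] less by (simp add: swap)
  next
    case 3
    then show ?thesis using singleton_step_mono_left[OF m step] less by (simp add: swap)
  next
    case 4
    then show ?thesis using singleton_step_mono_right[OF step] less by (simp add: swap)
  next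
    case 5
    then show ?thesis using singleton_step_of_le[OF m] after i ac by (simp add: swap)
  next
    case 6
    then show ?thesis using step by (simp add: swap)
  qed
qed

section \<open>Rook numbers of singleton boards\<close>

lemma finite_cells: "finite (cells b)"
proof -
  have "cells b \<subseteq> {..<length b} \<times> {..sum_list b}"
    unfolding cells_def using elem_le_sum_list by fastforce
  then show ?thesis by (rule finite_subset) auto
qed

lemma finite_rook_placements: "finite (rook_placements m k b)"
  by (rule finite_subset[of _ "Pow (cells b)"]) (auto simp: rook_placements_def finite_cells)

lemma rook_placement_finite: "P \<in> rook_placements m k b \<Longrightarrow> finite P"
  unfolding rook_placements_def using finite_cells finite_subset by blast

lemma rook_num_0: "rook_num m 0 b = 1"
proof -
  have "P = {}" if "P \<in> rook_placements m 0 b" for P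
    using that rook_placement_finite[OF that] by (simp add: rook_placements_def)
  moreover have "{} \<in> rook_placements m 0 b" by (simp add: rook_placements_def)
  ultimately have "rook_placements m 0 b = {{}}" by blast
  then show ?thesis by (simp add: rook_num_def)
qed

lemma level_eq_iff:
  assumes m: "m > 0" and "t \<ge> 1" "r \<ge> 1"
  shows "level m r = t \<longleftrightarrow> (t - 1) * m < r \<and> r \<le> t * m"
proof -
  have "level m r = t \<longleftrightarrow> t - 1 \<le> (r - 1) div m \<and> (r - 1) div m < t"
    unfolding level_def using assms by linarith
  also have "\<dots> \<longleftrightarrow> (t - 1) * m \<le> r - 1 \<and> r - 1 < t * m"
    using less_eq_div_iff_mult_less_eq[OF m] div_less_iff_less_mult[OF m] by simp
  finally show ?thesis using assms by linarith
qed

lemma card_level_rows: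
  assumes "m > 0" "t \<ge> 1" "t * m \<le> h"
  shows "card {r \<in> {1..h}. level m r = t} = m"
proof -
  have "r \<in> {1..h} \<and> level m r = t \<longleftrightarrow> r \<in> {(t - 1) * m <.. t * m}" for r
    using assms level_eq_iff[OF assms(1,2), of r] by (cases "r \<ge> 1") auto
  then have "{r \<in> {1..h}. level m r = t} = {(t - 1) * m <.. t * m}" by blast
  moreover have "t * m - (t - 1) * m = m"
    using assms by (simp add: diff_mult_distrib)
  ultimately show ?thesis by simp
qed

definition free_rows :: "nat \<Rightarrow> nat \<Rightarrow> (nat \<times> nat) set \<Rightarrow> nat set" where
  "free_rows m h P = {r \<in> {1..h}. level m r \<notin> (\<lambda>(i, r). level m r) ` P}"

lemma card_free_rows:
  assumes m: "m > 0" and low: "\<forall>i<length b. b ! i \<le> floor_m m h"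
    and P: "P \<in> rook_placements m k b"
  shows "card (free_rows m h P) + m * k = h"
proof -
  define L where "L = (\<lambda>(i, r). level m r) ` P"
  have card_L: "card L = k" and fin_L: "finite L"
    using P rook_placement_finite[OF P] by (auto simp: L_def rook_placements_def card_image)
  have L_sub: "L \<subseteq> {1..h div m}"
  proof
    fix t assume "t \<in> L"
    then obtain i r where "(i, r) \<in> P" and t: "t = level m r" by (auto simp: L_def)
    then have "1 \<le> r" "r \<le> h div m * m"
      using P low by (auto simp: rook_placements_def cells_def floor_m_def intro: order_trans)
    then have "(r - 1) div m < h div m"
      using div_less_iff_less_mult[OF m] by simp
    then show "t \<in> {1..h div m}" by (simp add: t level_def)
  qed
  define U where "U = {r \<in> {1..h}. level m r \<in> L}"
  have "U = (\<Union>t\<in>L. {r \<in> {1..h}. level m r = t})" by (auto simp: U_def)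
  then have "card U = (\<Sum>t\<in>L. card {r \<in> {1..h}. level m r = t})"
    using fin_L by (simp only:) (rule card_UN_disjoint, auto)
  also have "\<dots> = (\<Sum>t\<in>L. m)"
  proof (rule sum.cong)
    fix t assume "t \<in> L"
    then show "card {r \<in> {1..h}. level m r = t} = m"
      using L_sub less_eq_div_iff_mult_less_eq[OF m] by (intro card_level_rows[OF m]) auto
  qed simp
  also have "\<dots> = m * k" using card_L by simp
  finally have card_U: "card U = m * k" .
  have "free_rows m h P = {1..h} - U" by (auto simp: free_rows_def U_def L_def)
  moreover have "U \<subseteq> {1..h}" by (auto simp: U_def)
  ultimately show ?thesis using card_U card_mono[of "{1..h}" U] by (simp add: card_Diff_subset finite_subset)
qed

lemma cells_snoc: "cells (b @ [h]) = cells b \<union> {(length b, r) | r. 1 \<le> r \<and> r \<le> h}"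
  unfolding cells_def by (auto simp: nth_append less_Suc_eq)

lemma last_column_notin_cells: "(length b, r) \<notin> cells b"
  by (simp add: cells_def)

lemma rook_placements_snoc_avoiding:
  "{Q \<in> rook_placements m k (b @ [h]). \<forall>r. (length b, r) \<notin> Q} = rook_placements m k b"
  unfolding rook_placements_def cells_snoc using last_column_notin_cells by blast

lemma inj_on_insert_last_column:
  "inj_on (\<lambda>(P, r). insert (length b, r) P) (SIGMA P:rook_placements m k b. A P)"
proof (rule inj_onI, clarify)
  fix P r P' r'
  assume "P \<in> rook_placements m k b" "P' \<in> rook_placements m k b"
    and eq: "insert (length b, r) P = insert (length b, r') P'"
  then have notin: "(length b, s) \<notin> P" "(length b, s) \<notin> P'" for s
    using last_column_notin_cells by (auto simp: rook_placements_def)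
  have "(length b, r) \<in> insert (length b, r') P'" using eq by blast
  then have "r = r'" using notin by auto
  then show "P = P' \<and> r = r'"
    using eq notin by (metis insert_ident)
qed

lemma rook_placements_snoc_using:
  "{Q \<in> rook_placements m (Suc k) (b @ [h]). \<exists>r. (length b, r) \<in> Q}
     = (\<lambda>(P, r). insert (length b, r) P) ` (SIGMA P:rook_placements m k b. free_rows m h P)"
proof (intro equalityI subsetI)
  fix Q assume "Q \<in> {Q \<in> rook_placements m (Suc k) (b @ [h]). \<exists>r. (length b, r) \<in> Q}"
  then obtain r where Q: "Q \<in> rook_placements m (Suc k) (b @ [h])" and r: "(length b, r) \<in> Q"
    by blast
  have fin_Q: "finite Q" using rook_placement_finite[OF Q] .
  have Q_sub: "Q \<subseteq> cells (b @ [h])" and card_Q: "card Q = Suc k" and inj_col: "inj_on fst Q"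
    and inj_level: "inj_on (\<lambda>(i, r). level m r) Q"
    using Q by (auto simp: rook_placements_def)
  define P where "P = Q - {(length b, r)}"
  have "P \<subseteq> cells b"
  proof
    fix c assume c: "c \<in> P"
    then have "fst c \<noteq> length b" using inj_onD[OF inj_col, of c "(length b, r)"] r by (auto simp: P_def)
    then show "c \<in> cells b" using c Q_sub by (auto simp: P_def cells_snoc)
  qed
  then have "P \<in> rook_placements m k b"
    using card_Q fin_Q r inj_col inj_level
    by (auto simp: rook_placements_def P_def card_Diff_singleton intro: inj_on_subset)
  moreover have "r \<in> free_rows m h P"
  proof -
    have "1 \<le> r \<and> r \<le> h" using r Q_sub last_column_notin_cells by (auto simp: cells_snoc)
    moreover have "level m r \<notin> (\<lambda>(i, r). level m r) ` P"
      using inj_level r by (auto simp: P_def inj_on_def)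
    ultimately show ?thesis by (simp add: free_rows_def)
  qed
  moreover have "Q = insert (length b, r) P" using r by (auto simp: P_def)
  ultimately show "Q \<in> (\<lambda>(P, r). insert (length b, r) P) ` (SIGMA P:rook_placements m k b. free_rows m h P)"
    by blast
next
  fix Q assume "Q \<in> (\<lambda>(P, r). insert (length b, r) P) ` (SIGMA P:rook_placements m k b. free_rows m h P)"
  then obtain P r where P: "P \<in> rook_placements m k b" and r: "r \<in> free_rows m h P"
    and Q: "Q = insert (length b, r) P"
    by blast
  have P_sub: "P \<subseteq> cells b" using P by (simp add: rook_placements_def)
  then have "(length b, r) \<notin> P" "length b \<notin> fst ` P" using last_column_notin_cells by force+
  then show "Q \<in> {Q \<in> rook_placements m (Suc k) (b @ [h]). \<exists>r. (length b, r) \<in> Q}"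
    using P P_sub r rook_placement_finite[OF P]
    by (auto simp: Q rook_placements_def free_rows_def cells_snoc)
qed

lemma rook_num_snoc:
  assumes m: "m > 0" and low: "\<forall>i<length b. b ! i \<le> floor_m m h"
  shows "int (rook_num m (Suc k) (b @ [h]))
           = int (rook_num m (Suc k) b) + int (rook_num m k b) * (int h - int (m * k))"
proof -
  let ?S = "rook_placements m (Suc k) (b @ [h])"
  let ?using = "{Q \<in> ?S. \<exists>r. (length b, r) \<in> Q}"
  have "card ?S = card {Q \<in> ?S. \<forall>r. (length b, r) \<notin> Q} + card ?using"
    using finite_rook_placements by (subst card_Un_disjoint[symmetric]) (auto intro: arg_cong[where f = card])
  also have "card {Q \<in> ?S. \<forall>r. (length b, r) \<notin> Q} = rook_num m (Suc k) b"
    by (simp add: rook_placements_snoc_avoiding rook_num_def)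
  also have "card ?using = (\<Sum>P\<in>rook_placements m k b. card (free_rows m h P))"
    unfolding rook_placements_snoc_using
    by (simp add: card_image[OF inj_on_insert_last_column] card_SigmaI finite_rook_placements free_rows_def)
  finally have split: "card ?S = rook_num m (Suc k) b + (\<Sum>P\<in>rook_placements m k b. card (free_rows m h P))" .
  have "int (card (free_rows m h P)) = int h - int (m * k)" if "P \<in> rook_placements m k b" for P
    using card_free_rows[OF m low that] by linarith
  then have "(\<Sum>P\<in>rook_placements m k b. int (card (free_rows m h P))) = int (rook_num m k b) * (int h - int (m * k))"
    by (simp add: rook_num_def)
  then show ?thesis using split by (simp add: rook_num_def)
qed

(* The argument is the root vector in reverse order, so that its head is the root of the last
   column, whose index is length xs. *)
fun roots_rook_num :: "nat \<Rightarrow> nat \<Rightarrow> int list \<Rightarrow> int" where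
  "roots_rook_num m 0 xs = 1"
| "roots_rook_num m (Suc k) [] = 0"
| "roots_rook_num m (Suc k) (x # xs) =
     roots_rook_num m (Suc k) xs + roots_rook_num m k xs * (int m * (int (length xs) - int k) - x)"

lemma roots_rook_num_swap:
  "roots_rook_num m k (x # y # xs) = roots_rook_num m k (y # x # xs)"
  by (cases k; cases "k - 1") (simp_all add: algebra_simps)

lemma roots_rook_num_Cons_cong:
  assumes "\<And>k. roots_rook_num m k xs = roots_rook_num m k ys" and "length xs = length ys"
  shows "roots_rook_num m k (x # xs) = roots_rook_num m k (x # ys)"
  using assms by (cases k) simp_all

lemma roots_rook_num_move:
  "roots_rook_num m k (x # xs @ ys) = roots_rook_num m k (xs @ x # ys)"
proof (induction xs arbitrary: k)
  case (Cons y xs)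
  have "roots_rook_num m k (x # y # xs @ ys) = roots_rook_num m k (y # x # xs @ ys)"
    by (rule roots_rook_num_swap)
  also have "\<dots> = roots_rook_num m k (y # xs @ x # ys)"
    using Cons.IH by (intro roots_rook_num_Cons_cong) simp_all
  finally show ?case by simp
qed simp

lemma roots_rook_num_mset_eq:
  "mset xs = mset ys \<Longrightarrow> roots_rook_num m k xs = roots_rook_num m k ys"
proof (induction xs arbitrary: ys k)
  case (Cons x xs)
  then obtain us vs where ys: "ys = us @ x # vs"
    by (metis list.set_intros(1) set_mset_mset split_list)
  then have xs: "mset xs = mset (us @ vs)" using Cons.prems by simp
  have "roots_rook_num m k (x # xs) = roots_rook_num m k (x # us @ vs)"
    using Cons.IH[OF xs] mset_eq_length[OF xs] by (intro roots_rook_num_Cons_cong)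
  also have "\<dots> = roots_rook_num m k ys"
    unfolding ys by (rule roots_rook_num_move)
  finally show ?case .
qed simp

lemma rook_num_eq_roots_rook_num:
  assumes m: "m > 0"
  shows "ferrers b \<Longrightarrow> singleton_board m b \<Longrightarrow>
    int (rook_num m k b) = roots_rook_num m k (rev (root_vec m b))"
proof (induction b arbitrary: k rule: rev_induct)
  case Nil
  have "rook_placements m (Suc k) [] = {}" for k
    by (auto simp: rook_placements_def cells_def)
  then show ?case by (cases k) (simp add: rook_num_0, simp add: rook_num_def root_vec_def)
next
  case (snoc h b)
  have b: "ferrers b" "singleton_board m b"
    using ferrers_singleton_board_butlast[OF m snoc.prems] by auto
  have low: "\<forall>i<length b. b ! i \<le> floor_m m h"
    using ferrers_singleton_board_le_floor_last[OF m snoc.prems] by blast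
  show ?case
    using rook_num_snoc[OF m low] snoc.IH[OF b]
    by (cases k) (simp_all add: rook_num_0 root_vec_snoc algebra_simps)
qed

lemma rook_equiv_if_mset_root_vec_eq:
  assumes "m > 0" "ferrers b" "singleton_board m b" "ferrers c" "singleton_board m c"
    and "mset (root_vec m c) = mset (root_vec m b)"
  shows "rook_equiv m c b"
  unfolding rook_equiv_def
proof
  fix k
  have "int (rook_num m k c) = roots_rook_num m k (rev (root_vec m c))"
    by (rule rook_num_eq_roots_rook_num[OF assms(1,4,5)])
  also have "\<dots> = roots_rook_num m k (rev (root_vec m b))"
    using assms(6) by (intro roots_rook_num_mset_eq) simp
  also have "\<dots> = int (rook_num m k b)"
    by (rule rook_num_eq_roots_rook_num[OF assms(1-3), symmetric])
  finally show "rook_num m k c = rook_num m k b" by simp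
qed

section \<open>Swapping two roots is an edge of the rook equivalence graph\<close>

definition board_of_roots :: "nat \<Rightarrow> int list \<Rightarrow> nat list" where
  "board_of_roots m xs = map (\<lambda>i. nat (int (m * i) - xs ! i)) [0..<length xs]"

lemma length_board_of_roots [simp]: "length (board_of_roots m xs) = length xs"
  by (simp add: board_of_roots_def)

lemma nth_board_of_roots: "i < length xs \<Longrightarrow> board_of_roots m xs ! i = nat (int (m * i) - xs ! i)"
  by (simp add: board_of_roots_def)

lemma root_vec_board_of_roots:
  "\<forall>i<length xs. xs ! i \<le> int (m * i) \<Longrightarrow> root_vec m (board_of_roots m xs) = xs"
  by (intro nth_equalityI) (auto simp: root_vec_def board_of_roots_def)

lemma board_of_roots_root_vec: "board_of_roots m (root_vec m b) = b"
  by (intro nth_equalityI) (auto simp: root_vec_def board_of_roots_def)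

lemma graph_vertex_board_of_roots:
  assumes m: "m > 0" and b: "ferrers b" "singleton_board m b"
    and xs: "singleton_roots m xs" "\<forall>i<length xs. xs ! i \<le> int (m * i)"
    and perm: "mset xs = mset (root_vec m b)"
  shows "board_of_roots m xs \<in> graph_vertices m b"
proof -
  have roots: "root_vec m (board_of_roots m xs) = xs"
    using root_vec_board_of_roots xs(2) .
  then have "ferrers (board_of_roots m xs) \<and> singleton_board m (board_of_roots m xs)"
    using singleton_roots_root_vec_iff[OF m, of "board_of_roots m xs"] xs(1) by simp
  moreover have "rook_equiv m (board_of_roots m xs) b"
    using rook_equiv_if_mset_root_vec_eq[OF m b] calculation perm roots by simp
  ultimately show ?thesis by (simp add: graph_vertices_def)
qed

lemma rook_edge_of_same_length:
  assumes "length p = length q" "i < length p" "j < length p" "i \<noteq> j" "k > 0"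
    "p ! i = q ! i + k" "q ! j = p ! j + k" "\<forall>l<length p. l \<noteq> i \<longrightarrow> l \<noteq> j \<longrightarrow> p ! l = q ! l"
  shows "rook_edge p q"
  unfolding rook_edge_def Let_def pad_def
  using assms by (intro exI[of _ "length p"]) auto

lemma rook_edge_board_of_roots_swap:
  assumes ac: "a < c" "c < length xs" "xs ! a < xs ! c"
    and heights: "xs ! c \<le> int (m * a)" "xs ! c \<le> int (m * c)"
  shows "rook_edge (board_of_roots m xs) (board_of_roots m (swap xs a c))"
proof (rule rook_edge_of_same_length)
  let ?k = "nat (xs ! c - xs ! a)"
  show "board_of_roots m xs ! a = board_of_roots m (swap xs a c) ! a + ?k"
    and "board_of_roots m (swap xs a c) ! c = board_of_roots m xs ! c + ?k"
    using ac heights by (simp_all add: nth_board_of_roots nth_swap)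
  show "\<forall>l<length (board_of_roots m xs). l \<noteq> a \<longrightarrow> l \<noteq> c \<longrightarrow>
      board_of_roots m xs ! l = board_of_roots m (swap xs a c) ! l"
    using ac by (simp add: nth_board_of_roots nth_swap)
qed (use ac in auto)

section \<open>Sorting the roots after the maximum\<close>

definition admissible_roots :: "nat \<Rightarrow> nat \<Rightarrow> nat list \<Rightarrow> int list \<Rightarrow> bool" where
  "admissible_roots m j b xs \<longleftrightarrow>
     mset xs = mset (root_vec m b) \<and> singleton_roots m xs \<and>
     (\<forall>i\<le>j. xs ! i = root_vec m b ! i) \<and> (\<forall>l<length xs. xs ! l \<le> xs ! j)"

definition settled :: "nat \<Rightarrow> nat \<Rightarrow> int list \<Rightarrow> bool" where
  "settled j p xs \<longleftrightarrow> (\<forall>i l. j \<le> i \<longrightarrow> i < p \<longrightarrow> i \<le> l \<longrightarrow> l < length xs \<longrightarrow> xs ! l \<le> xs ! i)"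

lemma settledD:
  "settled j p xs \<Longrightarrow> j \<le> i \<Longrightarrow> i < p \<Longrightarrow> i \<le> l \<Longrightarrow> l < length xs \<Longrightarrow> xs ! l \<le> xs ! i"
  by (simp add: settled_def)

lemma admissible_roots_le_at:
  "admissible_roots m j b xs \<Longrightarrow> l < length xs \<Longrightarrow> xs ! l \<le> xs ! j"
  unfolding admissible_roots_def by blast

lemma admissible_roots_length: "admissible_roots m j b xs \<Longrightarrow> length xs = length b"
  unfolding admissible_roots_def by (metis length_root_vec mset_eq_length)

lemma admissible_roots_prefix: "admissible_roots m j b xs \<Longrightarrow> i \<le> j \<Longrightarrow> xs ! i = root_vec m b ! i"
  unfolding admissible_roots_def by blast

lemma admissible_roots_le_mult:
  assumes m: "m > 0" and j: "j < length b" and xs: "admissible_roots m j b xs"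
  shows "\<forall>i<length xs. xs ! i \<le> int (m * i)"
proof -
  have "xs ! 0 = root_vec m b ! 0" using xs by (simp add: admissible_roots_def)
  also have "\<dots> \<le> 0" using j by (subst nth_root_vec) auto
  finally show ?thesis
    using singleton_roots_le_mult[OF m] xs by (auto simp: admissible_roots_def)
qed

lemma graph_edge_swap:
  assumes m: "m > 0" and b: "ferrers b" "singleton_board m b" and j: "j < length b"
    and xs: "admissible_roots m j b xs" and ys: "admissible_roots m j b (swap xs a c)"
    and ac: "a < c" "c < length xs" "xs ! a < xs ! c"
  shows "graph_edge m b (board_of_roots m xs) (board_of_roots m (swap xs a c))"
proof -
  have "xs ! c \<le> int (m * a)" "xs ! c \<le> int (m * c)"
    using admissible_roots_le_mult[OF m j xs] admissible_roots_le_mult[OF m j ys] ac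
    by (auto simp: nth_swap dest: spec[of _ a])
  then have "rook_edge (board_of_roots m xs) (board_of_roots m (swap xs a c))"
    using ac by (intro rook_edge_board_of_roots_swap)
  moreover have "board_of_roots m zs \<in> graph_vertices m b" if "admissible_roots m j b zs" for zs
    using that admissible_roots_le_mult[OF m j that]
    by (intro graph_vertex_board_of_roots[OF m b]) (auto simp: admissible_roots_def)
  ultimately show ?thesis using xs ys by (simp add: graph_edge_def)
qed

lemma admissible_roots_swap:
  assumes m: "m > 0" and xs: "admissible_roots m j b xs"
    and ac: "j < a" "a < c" "c < length xs" "xs ! a < xs ! c" "xs ! c \<le> xs ! (a - 1)"
    and after: "\<forall>l. c < l \<and> l < length xs \<longrightarrow> xs ! l \<le> xs ! a"
  shows "admissible_roots m j b (swap xs a c)"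
proof -
  have "singleton_roots m (swap xs a c)"
    using xs ac after by (intro singleton_roots_swap[OF m]) (auto simp: admissible_roots_def)
  moreover have "\<forall>i\<le>j. swap xs a c ! i = xs ! i"
    using ac by (simp add: nth_swap)
  moreover have "\<forall>l<length xs. swap xs a c ! l \<le> xs ! j"
    using admissible_roots_le_at[OF xs] ac by (simp add: nth_swap)
  ultimately show ?thesis
    using xs ac(2,3) unfolding admissible_roots_def by simp
qed

lemma settled_swap:
  "settled j p xs \<Longrightarrow> p \<le> a \<Longrightarrow> a < c \<Longrightarrow> c < length xs \<Longrightarrow> settled j p (swap xs a c)"
  unfolding settled_def by (auto simp: nth_swap)

lemma settled_Suc:
  assumes "settled j p xs" "\<forall>l. p < l \<and> l < length xs \<longrightarrow> xs ! l \<le> xs ! p"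
  shows "settled j (Suc p) xs"
  unfolding settled_def
proof (intro allI impI)
  fix i l assume "j \<le> i" "i < Suc p" "i \<le> l" "l < length xs"
  then consider "i < p" | "i = p" "l = p" | "i = p" "p < l" by linarith
  then show "xs ! l \<le> xs ! i"
    by cases (use assms \<open>j \<le> i\<close> \<open>i \<le> l\<close> \<open>l < length xs\<close> in \<open>auto simp: settled_def\<close>)
qed

lemma last_greater_entry:
  fixes xs :: "'a :: linorder list"
  assumes "p < l" "l < length xs" "xs ! p < xs ! l"
  obtains c where "p < c" "c < length xs" "xs ! p < xs ! c"
    and "\<forall>l. c < l \<and> l < length xs \<longrightarrow> xs ! l \<le> xs ! p"
proof -
  let ?greater = "{l. p < l \<and> l < length xs \<and> xs ! p < xs ! l}"
  have fin: "finite ?greater" and "?greater \<noteq> {}" using assms by auto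
  then have "Max ?greater \<in> ?greater" by (rule Max_in)
  moreover have "xs ! l \<le> xs ! p" if "Max ?greater < l" "l < length xs" for l
  proof (rule ccontr)
    assume "\<not> xs ! l \<le> xs ! p"
    then have "l \<le> Max ?greater" using fin that \<open>Max ?greater \<in> ?greater\<close> by (intro Max_ge) auto
    then show False using that by simp
  qed
  ultimately show ?thesis using that by blast
qed

lemma swap_with_last_greater:
  assumes m: "m > 0" and b: "ferrers b" "singleton_board m b" and j: "j < length b"
    and xs: "admissible_roots m j b xs" and settled_xs: "settled j p xs" and p: "j < p"
    and c: "p < c" "c < length xs" "xs ! p < xs ! c"
    and after: "\<forall>l. c < l \<and> l < length xs \<longrightarrow> xs ! l \<le> xs ! p"
  shows "graph_edge m b (board_of_roots m xs) (board_of_roots m (swap xs p c))"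
    and "admissible_roots m j b (swap xs p c)" and "settled j p (swap xs p c)"
proof -
  have "xs ! c \<le> xs ! (p - 1)"
    using p c by (intro settledD[OF settled_xs]) auto
  then show ys: "admissible_roots m j b (swap xs p c)"
    using admissible_roots_swap[OF m xs] p c after by simp
  show "graph_edge m b (board_of_roots m xs) (board_of_roots m (swap xs p c))"
    using graph_edge_swap[OF m b j xs ys] c by simp
  show "settled j p (swap xs p c)"
    using settled_swap[OF settled_xs order_refl c(1,2)] .
qed

lemma reachable_settled_Suc:
  assumes m: "m > 0" and b: "ferrers b" "singleton_board m b" and j: "j < length b"
  shows "admissible_roots m j b xs \<Longrightarrow> j < p \<Longrightarrow> p < length xs \<Longrightarrow> settled j p xs \<Longrightarrow>
    \<exists>ys. (graph_edge m b)\<^sup>*\<^sup>* (board_of_roots m xs) (board_of_roots m ys) \<and>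
         admissible_roots m j b ys \<and> settled j (Suc p) ys"
proof (induction "nat (xs ! j - xs ! p)" arbitrary: xs rule: less_induct)
  case less
  note xs = less.prems(1) and p = less.prems(2,3) and settled_xs = less.prems(4)
  show ?case
  proof (cases "\<forall>l. p < l \<and> l < length xs \<longrightarrow> xs ! l \<le> xs ! p")
    case True
    then show ?thesis using xs settled_Suc[OF settled_xs] by blast
  next
    case False
    then obtain l where "p < l" "l < length xs" "xs ! p < xs ! l" by (auto simp: not_le)
    then obtain c where c: "p < c" "c < length xs" "xs ! p < xs ! c"
      and after: "\<forall>l. c < l \<and> l < length xs \<longrightarrow> xs ! l \<le> xs ! p"
      by (rule last_greater_entry)
    note step = swap_with_last_greater[OF m b j xs settled_xs p(1) c after]
    have "swap xs p c ! p \<le> swap xs p c ! j"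
      using admissible_roots_le_at[OF step(2)] p(2) by simp
    moreover have "swap xs p c ! p = xs ! c" "swap xs p c ! j = xs ! j"
      using p c by (simp_all add: nth_swap)
    ultimately have "nat (swap xs p c ! j - swap xs p c ! p) < nat (xs ! j - xs ! p)"
      using c(3) by (simp add: zless_nat_conj)
    then obtain zs where
      "(graph_edge m b)\<^sup>*\<^sup>* (board_of_roots m (swap xs p c)) (board_of_roots m zs)"
      "admissible_roots m j b zs" "settled j (Suc p) zs"
      using less.hyps[OF _ step(2) p(1) _ step(3)] p(2) by (metis length_swap)
    then show ?thesis using step(1) by (blast intro: converse_rtranclp_into_rtranclp)
  qed
qed

lemma reachable_settled:
  assumes m: "m > 0" and b: "ferrers b" "singleton_board m b" and j: "j < length b"
    and root: "admissible_roots m j b (root_vec m b)"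
  shows "Suc j \<le> p \<Longrightarrow> p \<le> length b \<Longrightarrow>
    \<exists>ys. (graph_edge m b)\<^sup>*\<^sup>* b (board_of_roots m ys) \<and> admissible_roots m j b ys \<and> settled j p ys"
proof (induction p rule: dec_induct)
  case base
  have "settled j (Suc j) (root_vec m b)"
    using admissible_roots_le_at[OF root] by (intro settled_Suc) (simp_all add: settled_def)
  then show ?case
    using root by (intro exI[of _ "root_vec m b"]) (simp add: board_of_roots_root_vec)
next
  case (step q)
  obtain ys where ys: "(graph_edge m b)\<^sup>*\<^sup>* b (board_of_roots m ys)"
    "admissible_roots m j b ys" "settled j q ys"
    using step.IH step.prems by auto
  have "j < q" "q < length ys"
    using step.hyps(1) step.prems admissible_roots_length[OF ys(2)] by simp_all
  then obtain zs where "(graph_edge m b)\<^sup>*\<^sup>* (board_of_roots m ys) (board_of_roots m zs)"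
    "admissible_roots m j b zs" "settled j (Suc q) zs"
    using reachable_settled_Suc[OF m b j ys(2) _ _ ys(3)] by blast
  then show ?case using ys(1) by (meson rtranclp_trans)
qed

theorem lemma19:
  fixes m :: nat and b :: "nat list" and j :: nat
  assumes "m > 0"
    and "ferrers b"
    and "singleton_board m b"
    and "j < length b"
    and "root_vec m b ! j = Max (set (root_vec m b))"
    and "\<forall>i<j. root_vec m b ! i \<noteq> Max (set (root_vec m b))"
  shows "\<exists>b'. length b' = length b \<and> (graph_edge m b)\<^sup>*\<^sup>* b b' \<and>
           (\<forall>i\<le>j. root_vec m b' ! i = root_vec m b ! i) \<and>
           (\<forall>i l. j \<le> i \<longrightarrow> i \<le> l \<longrightarrow> l < length b \<longrightarrow>
                  root_vec m b' ! l \<le> root_vec m b' ! i)"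
proof -
  have "root_vec m b ! l \<le> root_vec m b ! j" if "l < length b" for l
    unfolding assms(5) using that by (intro Max_ge) simp_all
  then have "admissible_roots m j b (root_vec m b)"
    using singleton_roots_root_vec_iff[OF assms(1)] assms(2,3) by (simp add: admissible_roots_def)
  then obtain ys where chain: "(graph_edge m b)\<^sup>*\<^sup>* b (board_of_roots m ys)"
    and ys: "admissible_roots m j b ys" and sorted: "settled j (length b) ys"
    using reachable_settled[OF assms(1-4) _ Suc_leI[OF assms(4)] order_refl] by blast
  have len: "length ys = length b"
    using admissible_roots_length[OF ys] .
  have roots: "root_vec m (board_of_roots m ys) = ys"
    using admissible_roots_le_mult[OF assms(1,4) ys] by (rule root_vec_board_of_roots)
  show ?thesis
  proof (intro exI[of _ "board_of_roots m ys"] conjI allI impI)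
    show "length (board_of_roots m ys) = length b" using len by simp
    show "(graph_edge m b)\<^sup>*\<^sup>* b (board_of_roots m ys)" using chain .
    show "root_vec m (board_of_roots m ys) ! i = root_vec m b ! i" if "i \<le> j" for i
      using admissible_roots_prefix[OF ys that] unfolding roots .
    show "root_vec m (board_of_roots m ys) ! l \<le> root_vec m (board_of_roots m ys) ! i"
      if "j \<le> i" "i \<le> l" "l < length b" for i l
      using settledD[OF sorted] that len unfolding roots by simp
  qed
qed

end
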